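(* Let $\mathcal Z$ be an instance space, $\mathcal W$ a hypothesis space and $\ell:\mathcal W\times\mathcal Z\to\mathbb R^+$ a non-negative loss. Let $\mu,\mu'$ be probability distributions on $\mathcal Z$ with $\mu\ll\mu'$. Let $S=\{Z_1,\dots,Z_n\}$ be drawn IID from $\mu$, and let $W$ be the output of any learning algorithm described by a conditional distribution $P_{W|S}$ (not necessarily empirical risk minimization), with marginal $P_W$. Let $L_{\mu'}(w)=\mathbb E_{Z\sim\mu'}[\ell(w,Z)]$ and $\hat L(w,S)=\frac1n\sum_{i=1}^n\ell(w,Z_i)$. Assume there are $b_-<0<b_+$ and a function $\psi$ such that under $(W,Z)\sim P_W\otimes\mu'$, $\log\mathbb E[e^{\lambda(\ell(W,Z)-\mathbb E[\ell(W,Z)])}]\le\psi(\lambda)$ for all $\lambda\in(b_-,b_+)$. With $\psi^{*-1}_{-}(x)=\inf_{\lambda\in[0,-b_-)}\frac{x+\psi(-\lambda)}{\lambda}$ and $\psi^{*-1}_{+}(x)=\inf_{\lambda\in[0,b_+)}\frac{x+\psi(\lambda)}{\lambda}$, we have $$\mathbb E_{WS}[L_{\mu'}(W)-\hat L(W,S)]\le\frac1n\sum_{i=1}^n\psi^{*-1}_{-}\big(I(W;Z_i)+D(\mu\|\mu')\big),$$ $$-\mathbb E_{WS}[L_{\mu'}(W)-\hat L(W,S)]\le\frac1n\sum_{i=1}^n\psi^{*-1}_{+}\big(I(W;Z_i)+D(\mu\|\mu')\big).$$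
   Context: $I(\cdot;\cdot)$ is mutual information under the joint distribution of $(W,S)$ given by $P_{W|S}$ and $\mu^{\otimes n}$; $D(\mu\|\mu')$ is the Kullback–Leibler divergence. *)

theory Defs
  imports "HOL-Probability.Probability"
begin

text \<open>The infimum is taken over lambda in the open interval (0, -b_minus) resp. (0, b_plus):
  the endpoint lambda = 0 only contributes the value +infinity (division by zero)
  in the paper's convention.\<close>

definition psi_inv_minus :: "(real \<Rightarrow> real) \<Rightarrow> real \<Rightarrow> real \<Rightarrow> real" where
  "psi_inv_minus psi bm x = Inf ((\<lambda>l. (x + psi (- l)) / l) ` {0<..< - bm})"

definition psi_inv_plus :: "(real \<Rightarrow> real) \<Rightarrow> real \<Rightarrow> real \<Rightarrow> real" where
  "psi_inv_plus psi bp x = Inf ((\<lambda>l. (x + psi l) / l) ` {0<..< bp})"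

text \<open>Joint distribution of (W,S): S ~ mu^n (product measure on functions {..<n} -> Z),
  W ~ K S (the learning algorithm, a Markov kernel).\<close>

definition joint_WS ::
  "'w measure \<Rightarrow> 'z measure \<Rightarrow> nat \<Rightarrow> 'z measure \<Rightarrow> ((nat \<Rightarrow> 'z) \<Rightarrow> 'w measure)
     \<Rightarrow> ('w \<times> (nat \<Rightarrow> 'z)) measure" where
  "joint_WS Wm Z n mu K =
     (PiM {..<n} (\<lambda>_. mu)) \<bind>
       (\<lambda>s. K s \<bind> (\<lambda>w. return (Wm \<Otimes>\<^sub>M PiM {..<n} (\<lambda>_. Z)) (w, s)))"

definition emp_risk :: "nat \<Rightarrow> ('w \<Rightarrow> 'z \<Rightarrow> real) \<Rightarrow> 'w \<Rightarrow> (nat \<Rightarrow> 'z) \<Rightarrow> real" where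
  "emp_risk n loss w s = (1 / real n) * (\<Sum>i<n. loss w (s i))"

definition pop_risk :: "'z measure \<Rightarrow> ('w \<Rightarrow> 'z \<Rightarrow> real) \<Rightarrow> 'w \<Rightarrow> real" where
  "pop_risk mu' loss w = (\<integral>z. loss w z \<partial>mu')"

end

theory Submission
  imports Defs
begin

text \<open>Fix a sample index i and let P be the law of (W, Z_i); its Z-marginal is mu.
  Relative to the reference measure P_W \<otimes> mu' the density of P factors, by the chain rule, as
  dP/d(P_W \<otimes> mu) times dmu/dmu', so the P-expectation of its logarithm is I(W; Z_i) + D(mu || mu').
  The Donsker-Varadhan inequality for P against P_W \<otimes> mu', applied to
  lambda (loss - E loss), therefore bounds lambda times the deviation of the i-th expected loss from
  the population risk by I(W; Z_i) + D(mu || mu') + psi lambda, for every lambda in (b_-, b_+).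
  Dividing by lambda of either sign and taking the infimum gives the two bounds for the i-th
  term, and averaging over i gives the bounds for the generalization gap.\<close>

lemma AE_density_pos_finite:
  assumes F: "F \<in> borel_measurable M" and fin: "finite_measure (density M F)"
  shows "AE x in density M F. 0 < F x \<and> F x \<noteq> \<infinity>"
proof -
  have "(\<integral>\<^sup>+x. F x \<partial>M) = emeasure (density M F) (space (density M F))"
    by (simp add: emeasure_density F)
  also have "\<dots> \<noteq> \<infinity>" using fin by (simp add: finite_measure.emeasure_finite)
  finally have "AE x in M. F x \<noteq> \<infinity>" by (rule nn_integral_noteq_infinite[OF F])
  then show ?thesis by (subst AE_density[OF F]) (auto elim: AE_mp)
qed

lemma nn_integral_density_divide_le:
  assumes F: "F \<in> borel_measurable M" and G: "G \<in> borel_measurable M" "\<And>x. 0 \<le> G x"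
  shows "(\<integral>\<^sup>+x. ennreal (G x / enn2real (F x)) \<partial>density M F) \<le> (\<integral>\<^sup>+x. ennreal (G x) \<partial>M)"
proof -
  have "(\<integral>\<^sup>+x. ennreal (G x / enn2real (F x)) \<partial>density M F)
      = (\<integral>\<^sup>+x. F x * ennreal (G x / enn2real (F x)) \<partial>M)"
    by (rule nn_integral_density) (use F G in auto)
  also have "\<dots> \<le> (\<integral>\<^sup>+x. ennreal (G x) \<partial>M)"
  proof (rule nn_integral_mono)
    fix x
    show "F x * ennreal (G x / enn2real (F x)) \<le> ennreal (G x)"
    proof (cases "F x")
      case (real r)
      then show ?thesis
        using G(2)[of x] by (cases "r = 0") (auto simp: ennreal_mult''[symmetric])
    qed simp
  qed
  finally show ?thesis .
qed

lemma (in prob_space) integral_exp_pos: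
  fixes g :: "'a \<Rightarrow> real"
  assumes "integrable M (\<lambda>x. exp (g x))"
  shows "0 < (\<integral>x. exp (g x) \<partial>M)"
proof -
  have "(\<integral>x. exp (g x) \<partial>M) \<noteq> 0"
  proof
    assume "(\<integral>x. exp (g x) \<partial>M) = 0"
    then have "AE x in M. exp (g x) = 0"
      using integral_nonneg_eq_0_iff_AE[OF assms] by simp
    then show False by (simp add: AE_False)
  qed
  then show ?thesis by (simp add: integral_nonneg_AE order_less_le)
qed

text \<open>With c the integral of e^g against Q and u = e^g / (c F), one has
  the integral of u against P at most 1 and g - ln F - ln c = ln u \<le> u - 1.\<close>

lemma donsker_varadhan_density:
  fixes g :: "'a \<Rightarrow> real"
  assumes Q: "prob_space Q" and F[measurable]: "F \<in> borel_measurable Q"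
    and P: "prob_space (density Q F)"
    and g[measurable]: "g \<in> borel_measurable Q"
    and int_exp: "integrable Q (\<lambda>x. exp (g x))" and int_g: "integrable (density Q F) g"
    and int_lnF: "integrable (density Q F) (\<lambda>x. ln (enn2real (F x)))"
  shows "(\<integral>x. g x \<partial>density Q F)
    \<le> (\<integral>x. ln (enn2real (F x)) \<partial>density Q F) + ln (\<integral>x. exp (g x) \<partial>Q)"
proof -
  interpret Q: prob_space Q by fact
  interpret P: prob_space "density Q F" by fact
  define c where "c = (\<integral>x. exp (g x) \<partial>Q)"
  have c: "0 < c" unfolding c_def by (rule Q.integral_exp_pos[OF int_exp])
  define u where "u x = exp (g x) / c / enn2real (F x)" for x
  have u_nonneg: "0 \<le> u x" for x unfolding u_def using c by simp
  have [measurable]: "u \<in> borel_measurable Q" unfolding u_def by measurable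
  have "(\<integral>\<^sup>+x. ennreal (u x) \<partial>density Q F) \<le> (\<integral>\<^sup>+x. ennreal (exp (g x) / c) \<partial>Q)"
    unfolding u_def by (rule nn_integral_density_divide_le) (use c in auto)
  also have "\<dots> = ennreal (\<integral>x. exp (g x) / c \<partial>Q)"
    by (rule nn_integral_eq_integral) (use int_exp c in auto)
  also have "(\<integral>x. exp (g x) / c \<partial>Q) = 1" using c by (simp add: c_def)
  finally have nn_u: "(\<integral>\<^sup>+x. ennreal (u x) \<partial>density Q F) \<le> 1" by simp
  have int_u: "integrable (density Q F) u"
    by (rule integrableI_nonneg) (use nn_u u_nonneg in \<open>auto simp: le_less_trans\<close>)
  have "(\<integral>x. u x \<partial>density Q F) = enn2real (\<integral>\<^sup>+x. ennreal (u x) \<partial>density Q F)"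
    by (rule integral_eq_nn_integral) (use u_nonneg int_u in auto)
  also have "\<dots> \<le> 1" using nn_u by (simp add: enn2real_leI)
  finally have int_u_le: "(\<integral>x. u x \<partial>density Q F) \<le> 1" .
  have "AE x in density Q F. g x - ln (enn2real (F x)) - ln c \<le> u x - 1"
    using AE_density_pos_finite[OF F P.finite_measure_axioms]
  proof eventually_elim
    case (elim x)
    then have F_pos: "0 < enn2real (F x)"
      by (simp add: enn2real_positive_iff top.not_eq_extremum)
    have "g x - ln (enn2real (F x)) - ln c = ln (u x)"
      unfolding u_def using F_pos c by (simp add: ln_div ln_mult)
    also have "\<dots> \<le> u x - 1"
      by (rule ln_le_minus_one) (use F_pos c in \<open>simp add: u_def\<close>)
    finally show ?case .
  qed
  then have "(\<integral>x. g x - ln (enn2real (F x)) - ln c \<partial>density Q F) \<le> (\<integral>x. u x - 1 \<partial>density Q F)"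
    by (intro integral_mono_AE) (use int_g int_lnF int_u in auto)
  moreover have "measure (density Q F) (space Q) = 1" using P.prob_space by simp
  ultimately show ?thesis using int_u_le int_g int_lnF int_u by (simp add: c_def)
qed

lemma entropy_density_exp_1:
  "entropy_density (exp 1) M N = (\<lambda>x. ln (enn2real (RN_deriv M N x)))"
  by (simp add: entropy_density_def log_def comp_def)

lemma pair_measure_density_snd:
  assumes "h \<in> borel_measurable N" "sigma_finite_measure N" "sigma_finite_measure (density N h)"
  shows "M \<Otimes>\<^sub>M density N h = density (M \<Otimes>\<^sub>M N) (\<lambda>p. h (snd p))"
proof -
  have "M \<Otimes>\<^sub>M density N h = density M (\<lambda>_. 1) \<Otimes>\<^sub>M density N h" by (simp only: density_1)
  also have "\<dots> = density (M \<Otimes>\<^sub>M N) (\<lambda>(x, y). 1 * h y)"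
    by (rule pair_measure_density) (use assms in auto)
  finally show ?thesis by (simp add: case_prod_beta')
qed

lemma (in prob_space) ln_integral_exp_centered_nonneg:
  fixes X :: "'a \<Rightarrow> real"
  assumes "integrable M X" "integrable M (\<lambda>x. exp (l * (X x - expectation X)))"
  shows "0 \<le> ln (\<integral>x. exp (l * (X x - expectation X)) \<partial>M)"
proof -
  have "1 = (\<integral>x. 1 + l * (X x - expectation X) \<partial>M)"
    using assms(1) by (simp add: prob_space)
  also have "\<dots> \<le> (\<integral>x. exp (l * (X x - expectation X)) \<partial>M)"
    by (rule integral_mono) (use assms in auto)
  finally show ?thesis by simp
qed

lemma le_psi_inv:
  assumes "bm < 0" "0 < bp" and bound: "\<And>l. bm < l \<Longrightarrow> l < bp \<Longrightarrow> l * d \<le> x + psi l"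
  shows "- d \<le> psi_inv_minus psi bm x" and "d \<le> psi_inv_plus psi bp x"
proof -
  show "- d \<le> psi_inv_minus psi bm x"
    unfolding psi_inv_minus_def
  proof (rule cInf_greatest)
    fix y assume "y \<in> (\<lambda>l. (x + psi (- l)) / l) ` {0<..< - bm}"
    then obtain l where l: "0 < l" "l < - bm" and y: "y = (x + psi (- l)) / l" by auto
    have "- l * d \<le> x + psi (- l)" using bound[of "- l"] l assms(2) by simp
    then show "- d \<le> y" unfolding y using l(1) by (simp add: pos_le_divide_eq mult.commute)
  qed (use assms(1) in simp)
  show "d \<le> psi_inv_plus psi bp x"
    unfolding psi_inv_plus_def
  proof (rule cInf_greatest)
    fix y assume "y \<in> (\<lambda>l. (x + psi l) / l) ` {0<..< bp}"
    then obtain l where l: "0 < l" "l < bp" and y: "y = (x + psi l) / l" by auto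
    have "l * d \<le> x + psi l" using bound[of l] l assms(1) by simp
    then show "d \<le> y" unfolding y using l(1) by (simp add: pos_le_divide_eq mult.commute)
  qed (use assms(2) in simp)
qed

lemma psi_inv_nonneg:
  assumes "bm < 0" "0 < bp" "0 \<le> x" and psi: "\<And>l. bm < l \<Longrightarrow> l < bp \<Longrightarrow> 0 \<le> psi l"
  shows "0 \<le> psi_inv_minus psi bm x" and "0 \<le> psi_inv_plus psi bp x"
  using le_psi_inv[of bm bp 0 x psi] assms by auto

text \<open>Recall that KL_divergence b M N is the divergence of N from M, and
  absolutely_continuous M N means N \<ll> M: here mu \<ll> mu' and P \<ll> PW \<otimes> mu.\<close>

locale pair_reference_change =
  fixes Wm :: "'w measure" and Z :: "'z measure"
    and PW :: "'w measure" and mu mu' :: "'z measure" and P :: "('w \<times> 'z) measure"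
  assumes PW: "prob_space PW" "sets PW = sets Wm"
    and mu: "prob_space mu" "sets mu = sets Z"
    and mu': "prob_space mu'" "sets mu' = sets Z"
    and ac: "absolutely_continuous mu' mu"
    and D_finite: "integrable mu (entropy_density (exp 1) mu' mu)"
    and P: "prob_space P" "sets P = sets (Wm \<Otimes>\<^sub>M Z)" "distr P Z snd = mu"
    and ac_P: "absolutely_continuous (PW \<Otimes>\<^sub>M mu) P"
    and I_finite: "integrable P (entropy_density (exp 1) (PW \<Otimes>\<^sub>M mu) P)"
begin

sublocale mu: prob_space mu by (rule mu(1))
sublocale mu': prob_space mu' by (rule mu'(1))
sublocale P: prob_space P by (rule P(1))
sublocale R: prob_space "PW \<Otimes>\<^sub>M mu" by (rule prob_space_pair) (fact PW(1) mu(1))+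
sublocale Q: prob_space "PW \<Otimes>\<^sub>M mu'" by (rule prob_space_pair) (fact PW(1) mu'(1))+

lemma sets_pair_reference[measurable_cong]:
  "sets (PW \<Otimes>\<^sub>M mu) = sets (Wm \<Otimes>\<^sub>M Z)" "sets (PW \<Otimes>\<^sub>M mu') = sets (Wm \<Otimes>\<^sub>M Z)"
  by (rule sets_pair_measure_cong; fact PW(2) mu(2) mu'(2))+

lemmas [measurable_cong] = PW(2) mu(2) mu'(2) P(2)

lemma measurable_RN_derivs[measurable]:
  "RN_deriv mu' mu \<in> borel_measurable Z" "RN_deriv (PW \<Otimes>\<^sub>M mu) P \<in> borel_measurable (Wm \<Otimes>\<^sub>M Z)"
  using borel_measurable_RN_deriv[of mu' mu] borel_measurable_RN_deriv[of "PW \<Otimes>\<^sub>M mu" P] by simp_all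

definition chained_RN_deriv :: "'w \<times> 'z \<Rightarrow> ennreal" where
  "chained_RN_deriv x = RN_deriv mu' mu (snd x) * RN_deriv (PW \<Otimes>\<^sub>M mu) P x"

lemma measurable_chained_RN_deriv[measurable]: "chained_RN_deriv \<in> borel_measurable (Wm \<Otimes>\<^sub>M Z)"
  unfolding chained_RN_deriv_def[abs_def] by measurable

lemma density_RN_deriv_mu: "density mu' (RN_deriv mu' mu) = mu"
  by (rule mu'.density_RN_deriv[OF ac]) (simp add: mu(2) mu'(2))

lemma density_RN_deriv_P: "density (PW \<Otimes>\<^sub>M mu) (RN_deriv (PW \<Otimes>\<^sub>M mu) P) = P"
  by (rule R.density_RN_deriv[OF ac_P]) (simp add: P(2) sets_pair_reference)

lemma density_chained_RN_deriv: "density (PW \<Otimes>\<^sub>M mu') chained_RN_deriv = P"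
proof -
  have "PW \<Otimes>\<^sub>M mu = density (PW \<Otimes>\<^sub>M mu') (\<lambda>p. RN_deriv mu' mu (snd p))"
    by (subst density_RN_deriv_mu[symmetric], rule pair_measure_density_snd)
      (simp_all add: density_RN_deriv_mu mu'.sigma_finite_measure_axioms mu.sigma_finite_measure_axioms)
  then have "density (PW \<Otimes>\<^sub>M mu') chained_RN_deriv = density (PW \<Otimes>\<^sub>M mu) (RN_deriv (PW \<Otimes>\<^sub>M mu) P)"
    by (simp add: density_density_eq chained_RN_deriv_def[abs_def])
  also have "\<dots> = P" by (rule density_RN_deriv_P)
  finally show ?thesis .
qed

lemma AE_ln_chained_RN_deriv:
  "AE x in P. ln (enn2real (chained_RN_deriv x))
    = ln (enn2real (RN_deriv mu' mu (snd x))) + ln (enn2real (RN_deriv (PW \<Otimes>\<^sub>M mu) P x))"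
proof -
  have "AE z in mu. 0 < RN_deriv mu' mu z \<and> RN_deriv mu' mu z \<noteq> \<infinity>"
    using AE_density_pos_finite[of "RN_deriv mu' mu" mu', unfolded density_RN_deriv_mu]
      mu.finite_measure_axioms by simp
  then have "AE x in P. 0 < RN_deriv mu' mu (snd x) \<and> RN_deriv mu' mu (snd x) \<noteq> \<infinity>"
    by (intro AE_distrD[of snd P Z]) (unfold P(3), simp_all)
  moreover have "AE x in P. 0 < RN_deriv (PW \<Otimes>\<^sub>M mu) P x \<and> RN_deriv (PW \<Otimes>\<^sub>M mu) P x \<noteq> \<infinity>"
    using AE_density_pos_finite[of "RN_deriv (PW \<Otimes>\<^sub>M mu) P" "PW \<Otimes>\<^sub>M mu", unfolded density_RN_deriv_P]
      P.finite_measure_axioms by simp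
  ultimately show ?thesis
  proof eventually_elim
    case (elim x)
    then have "0 < enn2real (RN_deriv mu' mu (snd x))" "0 < enn2real (RN_deriv (PW \<Otimes>\<^sub>M mu) P x)"
      by (auto simp: enn2real_positive_iff top.not_eq_extremum)
    then show ?case by (simp add: chained_RN_deriv_def enn2real_mult ln_mult)
  qed
qed

lemma
  shows integrable_ln_RN_deriv_snd: "integrable P (\<lambda>x. ln (enn2real (RN_deriv mu' mu (snd x))))"
    and KL_divergence_eq_integral_snd:
      "KL_divergence (exp 1) mu' mu = (\<integral>x. ln (enn2real (RN_deriv mu' mu (snd x))) \<partial>P)"
proof -
  have "integrable (distr P Z snd) (\<lambda>z. ln (enn2real (RN_deriv mu' mu z)))"
    using D_finite by (simp add: P(3) entropy_density_exp_1)
  then show "integrable P (\<lambda>x. ln (enn2real (RN_deriv mu' mu (snd x))))"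
    by (subst (asm) integrable_distr_eq) measurable
  have "KL_divergence (exp 1) mu' mu = (\<integral>z. ln (enn2real (RN_deriv mu' mu z)) \<partial>distr P Z snd)"
    by (simp add: KL_divergence_def entropy_density_exp_1 P(3))
  also have "\<dots> = (\<integral>x. ln (enn2real (RN_deriv mu' mu (snd x))) \<partial>P)"
    by (rule integral_distr) measurable
  finally show "KL_divergence (exp 1) mu' mu = (\<integral>x. ln (enn2real (RN_deriv mu' mu (snd x))) \<partial>P)" .
qed

lemma
  shows integrable_ln_chained_RN_deriv: "integrable P (\<lambda>x. ln (enn2real (chained_RN_deriv x)))"
    and integral_ln_chained_RN_deriv: "(\<integral>x. ln (enn2real (chained_RN_deriv x)) \<partial>P)
      = KL_divergence (exp 1) (PW \<Otimes>\<^sub>M mu) P + KL_divergence (exp 1) mu' mu"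
proof -
  have int_f: "integrable P (\<lambda>x. ln (enn2real (RN_deriv (PW \<Otimes>\<^sub>M mu) P x)))"
    using I_finite by (simp add: entropy_density_exp_1)
  have I_eq: "KL_divergence (exp 1) (PW \<Otimes>\<^sub>M mu) P = (\<integral>x. ln (enn2real (RN_deriv (PW \<Otimes>\<^sub>M mu) P x)) \<partial>P)"
    by (simp add: KL_divergence_def entropy_density_exp_1)
  show "integrable P (\<lambda>x. ln (enn2real (chained_RN_deriv x)))"
    using Bochner_Integration.integrable_add[OF integrable_ln_RN_deriv_snd int_f]
    by (rule integrable_cong_AE_imp) (use AE_ln_chained_RN_deriv in auto)
  show "(\<integral>x. ln (enn2real (chained_RN_deriv x)) \<partial>P)
      = KL_divergence (exp 1) (PW \<Otimes>\<^sub>M mu) P + KL_divergence (exp 1) mu' mu"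
    using integral_cong_AE[OF _ _ AE_ln_chained_RN_deriv] integrable_ln_RN_deriv_snd int_f
    by (simp add: I_eq KL_divergence_eq_integral_snd)
qed

lemma integral_le_KL_plus_log_integral_exp:
  fixes g :: "'w \<times> 'z \<Rightarrow> real"
  assumes g: "g \<in> borel_measurable (Wm \<Otimes>\<^sub>M Z)"
    and int_exp: "integrable (PW \<Otimes>\<^sub>M mu') (\<lambda>x. exp (g x))" and int_g: "integrable P g"
  shows "(\<integral>x. g x \<partial>P) \<le> KL_divergence (exp 1) (PW \<Otimes>\<^sub>M mu) P + KL_divergence (exp 1) mu' mu
    + ln (\<integral>x. exp (g x) \<partial>(PW \<Otimes>\<^sub>M mu'))"
proof -
  have F: "chained_RN_deriv \<in> borel_measurable (PW \<Otimes>\<^sub>M mu')" and g': "g \<in> borel_measurable (PW \<Otimes>\<^sub>M mu')"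
    using g by (simp_all only: measurable_cong_sets[OF sets_pair_reference(2) refl] measurable_chained_RN_deriv)
  have "(\<integral>x. g x \<partial>density (PW \<Otimes>\<^sub>M mu') chained_RN_deriv)
    \<le> (\<integral>x. ln (enn2real (chained_RN_deriv x)) \<partial>density (PW \<Otimes>\<^sub>M mu') chained_RN_deriv)
      + ln (\<integral>x. exp (g x) \<partial>(PW \<Otimes>\<^sub>M mu'))"
    by (rule donsker_varadhan_density[OF Q.prob_space_axioms F _ g' int_exp])
      (simp_all only: density_chained_RN_deriv P(1) int_g integrable_ln_chained_RN_deriv)
  then show ?thesis by (simp only: density_chained_RN_deriv integral_ln_chained_RN_deriv)
qed

lemma KL_sum_nonneg:
  "0 \<le> KL_divergence (exp 1) (PW \<Otimes>\<^sub>M mu) P + KL_divergence (exp 1) mu' mu"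
proof -
  have "(\<integral>x. 0 \<partial>P) \<le> KL_divergence (exp 1) (PW \<Otimes>\<^sub>M mu) P + KL_divergence (exp 1) mu' mu
      + ln (\<integral>x. exp 0 \<partial>(PW \<Otimes>\<^sub>M mu'))"
    by (rule integral_le_KL_plus_log_integral_exp) simp_all
  then show ?thesis using Q.prob_space by simp
qed

lemma deviation_le_psi_inv:
  fixes X :: "'w \<times> 'z \<Rightarrow> real"
  assumes X: "X \<in> borel_measurable (Wm \<Otimes>\<^sub>M Z)" "integrable P X"
    and b: "bm < 0" "0 < bp"
    and cgf: "\<And>l. bm < l \<Longrightarrow> l < bp \<Longrightarrow>
      integrable (PW \<Otimes>\<^sub>M mu') (\<lambda>x. exp (l * (X x - m))) \<and>
      ln (\<integral>x. exp (l * (X x - m)) \<partial>(PW \<Otimes>\<^sub>M mu')) \<le> psi l"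
  defines "A \<equiv> KL_divergence (exp 1) (PW \<Otimes>\<^sub>M mu) P + KL_divergence (exp 1) mu' mu"
  shows "m - (\<integral>x. X x \<partial>P) \<le> psi_inv_minus psi bm A"
    and "(\<integral>x. X x \<partial>P) - m \<le> psi_inv_plus psi bp A"
proof -
  have "l * ((\<integral>x. X x \<partial>P) - m) \<le> A + psi l" if l: "bm < l" "l < bp" for l
  proof -
    have "l * ((\<integral>x. X x \<partial>P) - m) = (\<integral>x. l * (X x - m) \<partial>P)"
      using X(2) by (simp add: P.prob_space algebra_simps)
    also have "\<dots> \<le> A + ln (\<integral>x. exp (l * (X x - m)) \<partial>(PW \<Otimes>\<^sub>M mu'))"
      unfolding A_def by (rule integral_le_KL_plus_log_integral_exp) (use X cgf[OF l] in simp_all)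
    also have "\<dots> \<le> A + psi l" using cgf[OF l] by simp
    finally show ?thesis .
  qed
  from le_psi_inv[OF b this] show "m - (\<integral>x. X x \<partial>P) \<le> psi_inv_minus psi bm A"
    and "(\<integral>x. X x \<partial>P) - m \<le> psi_inv_plus psi bp A" by simp_all
qed

end

context
  fixes S X :: "'x measure" and Wm :: "'w measure" and K :: "'x \<Rightarrow> 'w measure"
  assumes S: "prob_space S" "sets S = sets X" and K: "K \<in> X \<rightarrow>\<^sub>M prob_algebra Wm"
begin

lemma measurable_bind_return_pair:
  "(\<lambda>s. K s \<bind> (\<lambda>w. return (Wm \<Otimes>\<^sub>M X) (w, s))) \<in> S \<rightarrow>\<^sub>M prob_algebra (Wm \<Otimes>\<^sub>M X)"
proof (rule measurable_bind_prob_space2)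
  show "K \<in> S \<rightarrow>\<^sub>M prob_algebra Wm" using K by (simp add: measurable_cong_sets[OF S(2) refl])
  have "(\<lambda>(s, w). (w, s)) \<in> S \<Otimes>\<^sub>M Wm \<rightarrow>\<^sub>M Wm \<Otimes>\<^sub>M X"
    unfolding measurable_cong_sets[OF sets_pair_measure_cong[OF S(2) refl] refl] by measurable
  then show "(\<lambda>(s, w). return (Wm \<Otimes>\<^sub>M X) (w, s)) \<in> S \<Otimes>\<^sub>M Wm \<rightarrow>\<^sub>M prob_algebra (Wm \<Otimes>\<^sub>M X)"
    using measurable_compose[OF _ measurable_return_prob_space] by (simp add: case_prod_beta')
qed

lemma prob_space_bind_return_pair:
  "prob_space (S \<bind> (\<lambda>s. K s \<bind> (\<lambda>w. return (Wm \<Otimes>\<^sub>M X) (w, s))))"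
  by (rule prob_space_bind'[OF _ measurable_bind_return_pair]) (simp add: S(1) space_prob_algebra)

lemma sets_bind_return_pair:
  "sets (S \<bind> (\<lambda>s. K s \<bind> (\<lambda>w. return (Wm \<Otimes>\<^sub>M X) (w, s)))) = sets (Wm \<Otimes>\<^sub>M X)"
  by (rule sets_bind'[OF _ measurable_bind_return_pair]) (simp add: S(1) space_prob_algebra)

lemma distr_bind_return_pair_snd:
  "distr (S \<bind> (\<lambda>s. K s \<bind> (\<lambda>w. return (Wm \<Otimes>\<^sub>M X) (w, s)))) X snd = S"
proof -
  have inner: "distr (K s \<bind> (\<lambda>w. return (Wm \<Otimes>\<^sub>M X) (w, s))) X snd = return X s"
    if s: "s \<in> space S" for s
  proof -
    have Ks: "prob_space (K s)" "sets (K s) = sets Wm"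
      using measurable_space[OF K, of s] s sets_eq_imp_space_eq[OF S(2)] by (auto simp: space_prob_algebra)
    have space_Ks: "space (K s) = space Wm" by (rule sets_eq_imp_space_eq[OF Ks(2)])
    have s_X: "s \<in> space X" using s sets_eq_imp_space_eq[OF S(2)] by simp
    have "(\<lambda>w. return (Wm \<Otimes>\<^sub>M X) (w, s)) \<in> K s \<rightarrow>\<^sub>M subprob_algebra (Wm \<Otimes>\<^sub>M X)"
      unfolding measurable_cong_sets[OF Ks(2) refl] using s_X by measurable
    then have "distr (K s \<bind> (\<lambda>w. return (Wm \<Otimes>\<^sub>M X) (w, s))) X snd
        = K s \<bind> (\<lambda>w. distr (return (Wm \<Otimes>\<^sub>M X) (w, s)) X snd)"
      by (rule distr_bind) (use Ks(1) prob_space.not_empty in auto)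
    also have "\<dots> = K s \<bind> (\<lambda>w. return X s)"
      by (intro bind_cong_All ballI) (simp add: space_Ks s_X space_pair_measure distr_return)
    also have "\<dots> = return X s"
      by (rule bind_const'[OF Ks(1)]) (simp add: s_X subprob_space_return)
    finally show ?thesis .
  qed
  have "distr (S \<bind> (\<lambda>s. K s \<bind> (\<lambda>w. return (Wm \<Otimes>\<^sub>M X) (w, s)))) X snd
      = S \<bind> (\<lambda>s. distr (K s \<bind> (\<lambda>w. return (Wm \<Otimes>\<^sub>M X) (w, s))) X snd)"
    by (rule distr_bind[OF measurable_prob_algebraD[OF measurable_bind_return_pair]])
      (use S(1) prob_space.not_empty in auto)
  also have "\<dots> = S \<bind> return X"
    by (intro bind_cong_All ballI) (simp add: inner)
  also have "\<dots> = S" by (rule bind_return'') (rule S(2))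
  finally show ?thesis .
qed

end

lemma
  fixes Z :: "'z measure" and Wm :: "'w measure"
  assumes mu: "prob_space mu" "sets mu = sets Z"
    and K: "K \<in> PiM {..<n} (\<lambda>_. Z) \<rightarrow>\<^sub>M prob_algebra Wm"
  shows prob_space_joint_WS: "prob_space (joint_WS Wm Z n mu K)"
    and sets_joint_WS: "sets (joint_WS Wm Z n mu K) = sets (Wm \<Otimes>\<^sub>M PiM {..<n} (\<lambda>_. Z))"
    and distr_joint_WS_component: "\<And>i. i < n \<Longrightarrow> distr (joint_WS Wm Z n mu K) Z (\<lambda>p. snd p i) = mu"
proof -
  have S: "prob_space (PiM {..<n} (\<lambda>_. mu))" "sets (PiM {..<n} (\<lambda>_. mu)) = sets (PiM {..<n} (\<lambda>_. Z))"
    using mu by (auto intro!: prob_space_PiM sets_PiM_cong)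
  note joint = prob_space_bind_return_pair[OF S K] sets_bind_return_pair[OF S K]
    distr_bind_return_pair_snd[OF S K]
  show "prob_space (joint_WS Wm Z n mu K)"
    and sets_J: "sets (joint_WS Wm Z n mu K) = sets (Wm \<Otimes>\<^sub>M PiM {..<n} (\<lambda>_. Z))"
    using joint by (simp_all add: joint_WS_def)
  fix i assume i: "i < n"
  have "distr (joint_WS Wm Z n mu K) Z (\<lambda>p. snd p i)
      = distr (distr (joint_WS Wm Z n mu K) (PiM {..<n} (\<lambda>_. Z)) snd) Z (\<lambda>s. s i)"
    using i by (subst distr_distr) (simp_all add: measurable_cong_sets[OF sets_J refl] comp_def)
  also have "\<dots> = distr (PiM {..<n} (\<lambda>_. mu)) mu (\<lambda>s. s i)"
    using joint(3) by (intro distr_cong) (simp_all add: joint_WS_def mu(2))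
  also have "\<dots> = mu" using mu i by (intro distr_PiM_component) auto
  finally show "distr (joint_WS Wm Z n mu K) Z (\<lambda>p. snd p i) = mu" .
qed

lemma
  fixes J :: "('w \<times> 'x) measure" and mu' :: "'z measure" and loss :: "'w \<Rightarrow> 'z \<Rightarrow> real"
  assumes J: "prob_space J" "fst \<in> J \<rightarrow>\<^sub>M Wm"
    and mu': "prob_space mu'" "sets mu' = sets Z"
    and int_loss: "integrable (distr J Wm fst \<Otimes>\<^sub>M mu') (\<lambda>p. loss (fst p) (snd p))"
  shows integrable_pop_risk_fst: "integrable J (\<lambda>p. pop_risk mu' loss (fst p))"
    and integral_pop_risk_fst:
      "(\<integral>p. pop_risk mu' loss (fst p) \<partial>J) = (\<integral>p. loss (fst p) (snd p) \<partial>(distr J Wm fst \<Otimes>\<^sub>M mu'))"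
proof -
  interpret pair_sigma_finite "distr J Wm fst" mu'
    by (intro pair_sigma_finite.intro prob_space_imp_sigma_finite prob_space.prob_space_distr J mu')
  have int_pop: "integrable (distr J Wm fst) (pop_risk mu' loss)"
    using integrable_fst'[OF int_loss] by (simp add: pop_risk_def[abs_def])
  then have [measurable]: "pop_risk mu' loss \<in> borel_measurable Wm" by simp
  show "integrable J (\<lambda>p. pop_risk mu' loss (fst p))"
    using int_pop J(2) by (simp add: integrable_distr_eq)
  have "(\<integral>p. pop_risk mu' loss (fst p) \<partial>J) = (\<integral>w. pop_risk mu' loss w \<partial>distr J Wm fst)"
    using J(2) by (simp add: integral_distr)
  also have "\<dots> = (\<integral>p. loss (fst p) (snd p) \<partial>(distr J Wm fst \<Otimes>\<^sub>M mu'))"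
    using integral_fst'[OF int_loss] by (simp add: pop_risk_def)
  finally show "(\<integral>p. pop_risk mu' loss (fst p) \<partial>J) = (\<integral>p. loss (fst p) (snd p) \<partial>(distr J Wm fst \<Otimes>\<^sub>M mu'))" .
qed

lemma integrable_emp_risk_iff:
  fixes J :: "('w \<times> (nat \<Rightarrow> 'z)) measure"
  assumes n: "0 < n" and loss_nonneg: "\<And>w z. 0 \<le> loss w z"
    and meas: "\<And>i. i < n \<Longrightarrow> (\<lambda>p. loss (fst p) (snd p i)) \<in> borel_measurable J"
  shows "integrable J (\<lambda>p. emp_risk n loss (fst p) (snd p))
    \<longleftrightarrow> (\<forall>i<n. integrable J (\<lambda>p. loss (fst p) (snd p i)))"
proof
  assume int_emp: "integrable J (\<lambda>p. emp_risk n loss (fst p) (snd p))"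
  have int_sum: "integrable J (\<lambda>p. \<Sum>i<n. loss (fst p) (snd p i))"
    using integrable_mult_right[OF int_emp, of "real n"] n by (simp add: emp_risk_def)
  show "\<forall>i<n. integrable J (\<lambda>p. loss (fst p) (snd p i))"
  proof (intro allI impI)
    fix j assume j: "j < n"
    show "integrable J (\<lambda>p. loss (fst p) (snd p j))"
    proof (rule Bochner_Integration.integrable_bound[OF int_sum meas[OF j]])
      have "loss (fst p) (snd p j) \<le> (\<Sum>i<n. loss (fst p) (snd p i))" for p
        by (rule member_le_sum) (use j loss_nonneg in auto)
      then show "AE p in J. norm (loss (fst p) (snd p j)) \<le> norm (\<Sum>i<n. loss (fst p) (snd p i))"
        using loss_nonneg by (simp add: sum_nonneg)
    qed
  qed
next
  assume "\<forall>i<n. integrable J (\<lambda>p. loss (fst p) (snd p i))"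
  then show "integrable J (\<lambda>p. emp_risk n loss (fst p) (snd p))"
    unfolding emp_risk_def by (intro integrable_mult_right integrable_sum) auto
qed

lemma generalization_gap_bound:
  fixes J :: "('w \<times> (nat \<Rightarrow> 'z)) measure"
  assumes n: "0 < n" and loss_nonneg: "\<And>w z. 0 \<le> loss w z"
    and meas: "\<And>i. i < n \<Longrightarrow> (\<lambda>p. loss (fst p) (snd p i)) \<in> borel_measurable J"
    and int_f: "integrable J (\<lambda>p. f (fst p))" and m: "(\<integral>p. f (fst p) \<partial>J) = m"
    and bounds: "\<And>i. i < n \<Longrightarrow> integrable J (\<lambda>p. loss (fst p) (snd p i)) \<Longrightarrow>
      m - (\<integral>p. loss (fst p) (snd p i) \<partial>J) \<le> a i \<and> (\<integral>p. loss (fst p) (snd p i) \<partial>J) - m \<le> b i"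
    and nonneg: "\<And>i. i < n \<Longrightarrow> 0 \<le> a i \<and> 0 \<le> b i"
  defines "G \<equiv> (\<integral>p. f (fst p) - emp_risk n loss (fst p) (snd p) \<partial>J)"
  shows "G \<le> (1 / real n) * (\<Sum>i<n. a i) \<and> - G \<le> (1 / real n) * (\<Sum>i<n. b i)"
proof (cases "\<forall>i<n. integrable J (\<lambda>p. loss (fst p) (snd p i))")
  case True
  define E where "E i = (\<integral>p. loss (fst p) (snd p i) \<partial>J)" for i
  have "G = m - (1 / real n) * (\<Sum>i<n. E i)"
    using True int_f integrable_emp_risk_iff[OF n loss_nonneg meas]
    by (simp add: G_def m E_def emp_risk_def integral_sum)
  then have G: "G = (1 / real n) * (\<Sum>i<n. m - E i)"
    using n by (simp add: sum_subtractf field_simps)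
  have "(1 / real n) * (\<Sum>i<n. m - E i) \<le> (1 / real n) * (\<Sum>i<n. a i)"
    and "(1 / real n) * (\<Sum>i<n. E i - m) \<le> (1 / real n) * (\<Sum>i<n. b i)"
    by (intro mult_left_mono sum_mono; use bounds True in \<open>force simp: E_def\<close>)+
  moreover have "- G = (1 / real n) * (\<Sum>i<n. E i - m)"
    unfolding G by (simp add: sum_subtractf field_simps) (simp add: divide_simps)
  ultimately show ?thesis unfolding G by simp
next
  case False
  then have "\<not> integrable J (\<lambda>p. emp_risk n loss (fst p) (snd p))"
    using integrable_emp_risk_iff[OF n loss_nonneg meas] by simp
  then have "\<not> integrable J (\<lambda>p. f (fst p) - emp_risk n loss (fst p) (snd p))"
    using Bochner_Integration.integrable_diff[OF int_f, of "\<lambda>p. f (fst p) - emp_risk n loss (fst p) (snd p)"]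
    by auto
  \<comment> \<open>the Bochner integral of a non-integrable function is 0, which the nonnegative bounds dominate\<close>
  then have "G = 0" unfolding G_def by (rule not_integrable_integral_eq)
  moreover have "0 \<le> (\<Sum>i<n. a i)" "0 \<le> (\<Sum>i<n. b i)"
    using nonneg by (auto intro: sum_nonneg)
  ultimately show ?thesis by simp
qed

lemma joint_component_deviation_bounds:
  fixes J :: "('w \<times> (nat \<Rightarrow> 'z)) measure" and Wm :: "'w measure" and Z :: "'z measure"
    and loss :: "'w \<Rightarrow> 'z \<Rightarrow> real"
  defines "PW \<equiv> distr J Wm fst"
  assumes J: "prob_space J" "sets J = sets (Wm \<Otimes>\<^sub>M PiM {..<n} (\<lambda>_. Z))"
    and i: "i < n" and marg: "distr J Z (\<lambda>p. snd p i) = mu"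
    and mu: "prob_space mu" "sets mu = sets Z"
    and mu': "prob_space mu'" "sets mu' = sets Z"
    and ac: "absolutely_continuous mu' mu"
    and D_finite: "integrable mu (entropy_density (exp 1) mu' mu)"
    and I_finite:
      "absolutely_continuous (PW \<Otimes>\<^sub>M mu) (distr J (Wm \<Otimes>\<^sub>M Z) (\<lambda>p. (fst p, snd p i))) \<and>
      integrable (distr J (Wm \<Otimes>\<^sub>M Z) (\<lambda>p. (fst p, snd p i)))
        (entropy_density (exp 1) (PW \<Otimes>\<^sub>M mu) (distr J (Wm \<Otimes>\<^sub>M Z) (\<lambda>p. (fst p, snd p i))))"
    and loss_meas: "(\<lambda>p. loss (fst p) (snd p)) \<in> borel_measurable (Wm \<Otimes>\<^sub>M Z)"
    and b: "bm < 0" "0 < bp"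
    and cgf: "\<And>l. bm < l \<Longrightarrow> l < bp \<Longrightarrow>
      integrable (PW \<Otimes>\<^sub>M mu') (\<lambda>p. exp (l * (loss (fst p) (snd p) - m))) \<and>
      ln (\<integral>p. exp (l * (loss (fst p) (snd p) - m)) \<partial>(PW \<Otimes>\<^sub>M mu')) \<le> psi l"
  defines "A \<equiv> prob_space.mutual_information J (exp 1) Wm Z fst (\<lambda>p. snd p i)
    + KL_divergence (exp 1) mu' mu"
    and "E \<equiv> (\<integral>p. loss (fst p) (snd p i) \<partial>J)"
  shows "0 \<le> A"
    and "integrable J (\<lambda>p. loss (fst p) (snd p i)) \<Longrightarrow>
      m - E \<le> psi_inv_minus psi bm A \<and> E - m \<le> psi_inv_plus psi bp A"
proof -
  interpret J: prob_space J by (rule J(1))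
  note [measurable_cong] = J(2)
  define P where "P = distr J (Wm \<Otimes>\<^sub>M Z) (\<lambda>p. (fst p, snd p i))"
  have pair_i[measurable]: "(\<lambda>p. (fst p, snd p i)) \<in> J \<rightarrow>\<^sub>M Wm \<Otimes>\<^sub>M Z"
    using i by (measurable; simp)
  have PW: "prob_space PW" "sets PW = sets Wm"
    unfolding PW_def by (rule J.prob_space_distr, measurable)
  have P: "prob_space P" "sets P = sets (Wm \<Otimes>\<^sub>M Z)"
    unfolding P_def by (rule J.prob_space_distr[OF pair_i]) simp
  have P_snd: "distr P Z snd = mu"
    unfolding P_def marg[symmetric] by (subst distr_distr) (simp_all add: comp_def)
  interpret pair_reference_change Wm Z PW mu mu' P
    by (rule pair_reference_change.intro[OF PW mu mu' ac D_finite P P_snd I_finite[folded P_def, THEN conjunct1]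
      I_finite[folded P_def, THEN conjunct2]])
  have A_eq: "A = KL_divergence (exp 1) (PW \<Otimes>\<^sub>M mu) P + KL_divergence (exp 1) mu' mu"
    unfolding A_def J.mutual_information_def PW_def P_def marg ..
  then show "0 \<le> A" using KL_sum_nonneg by simp
  assume int_J: "integrable J (\<lambda>p. loss (fst p) (snd p i))"
  have "integrable P (\<lambda>p. loss (fst p) (snd p))" and E_eq: "E = (\<integral>p. loss (fst p) (snd p) \<partial>P)"
    using int_J loss_meas by (simp_all add: P_def E_def integrable_distr_eq integral_distr)
  from deviation_le_psi_inv[OF loss_meas this(1) b cgf]
  show "m - E \<le> psi_inv_minus psi bm A \<and> E - m \<le> psi_inv_plus psi bp A"
    unfolding A_eq E_eq by simp
qed

theorem corollary1:
  fixes Z :: "'z measure" and Wm :: "'w measure"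
    and mu mu' :: "'z measure" and n :: nat
    and K :: "(nat \<Rightarrow> 'z) \<Rightarrow> 'w measure"
    and loss :: "'w \<Rightarrow> 'z \<Rightarrow> real"
    and psi :: "real \<Rightarrow> real" and bm bp :: real
  defines "J \<equiv> joint_WS Wm Z n mu K"
  defines "PW \<equiv> distr J Wm fst"
  defines "Q \<equiv> PW \<Otimes>\<^sub>M mu'"
  defines "m \<equiv> (\<integral>p. loss (fst p) (snd p) \<partial>Q)"
  assumes n_pos: "0 < n"
  assumes mu: "prob_space mu" "sets mu = sets Z"
  assumes mu': "prob_space mu'" "sets mu' = sets Z"
  assumes ac: "absolutely_continuous mu' mu"
  assumes D_finite: "integrable mu (entropy_density (exp 1) mu' mu)"
  assumes K: "K \<in> measurable (PiM {..<n} (\<lambda>_. Z)) (prob_algebra Wm)"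
  assumes loss_meas: "(\<lambda>p. loss (fst p) (snd p)) \<in> borel_measurable (Wm \<Otimes>\<^sub>M Z)"
  assumes loss_nonneg: "\<And>w z. 0 \<le> loss w z"
  assumes I_finite: "\<And>i. i < n \<Longrightarrow>
     absolutely_continuous (distr J Wm fst \<Otimes>\<^sub>M distr J Z (\<lambda>p. snd p i))
                           (distr J (Wm \<Otimes>\<^sub>M Z) (\<lambda>p. (fst p, snd p i))) \<and>
     integrable (distr J (Wm \<Otimes>\<^sub>M Z) (\<lambda>p. (fst p, snd p i)))
       (entropy_density (exp 1) (distr J Wm fst \<Otimes>\<^sub>M distr J Z (\<lambda>p. snd p i))
                                (distr J (Wm \<Otimes>\<^sub>M Z) (\<lambda>p. (fst p, snd p i))))"
  assumes b: "bm < 0" "0 < bp"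
  assumes loss_int: "integrable Q (\<lambda>p. loss (fst p) (snd p))"
  assumes cgf: "\<And>l. bm < l \<Longrightarrow> l < bp \<Longrightarrow>
     integrable Q (\<lambda>p. exp (l * (loss (fst p) (snd p) - m))) \<and>
     ln (\<integral>p. exp (l * (loss (fst p) (snd p) - m)) \<partial>Q) \<le> psi l"
  shows "((\<integral>p. pop_risk mu' loss (fst p) - emp_risk n loss (fst p) (snd p) \<partial>J)
           \<le> (1 / real n) * (\<Sum>i<n. psi_inv_minus psi bm
                 (prob_space.mutual_information J (exp 1) Wm Z fst (\<lambda>p. snd p i)
                  + KL_divergence (exp 1) mu' mu)))
         \<and> (- (\<integral>p. pop_risk mu' loss (fst p) - emp_risk n loss (fst p) (snd p) \<partial>J)
           \<le> (1 / real n) * (\<Sum>i<n. psi_inv_plus psi bp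
                 (prob_space.mutual_information J (exp 1) Wm Z fst (\<lambda>p. snd p i)
                  + KL_divergence (exp 1) mu' mu)))"
proof -
  have J: "prob_space J" and sets_J[measurable_cong]: "sets J = sets (Wm \<Otimes>\<^sub>M PiM {..<n} (\<lambda>_. Z))"
    and marg: "\<And>i. i < n \<Longrightarrow> distr J Z (\<lambda>p. snd p i) = mu"
    unfolding J_def by (rule prob_space_joint_WS[OF mu K] sets_joint_WS[OF mu K]
      distr_joint_WS_component[OF mu K])+
  have "fst \<in> J \<rightarrow>\<^sub>M Wm" by measurable
  from integrable_pop_risk_fst[OF J this mu'] integral_pop_risk_fst[OF J this mu'] loss_int
  have pop: "integrable J (\<lambda>p. pop_risk mu' loss (fst p))" "(\<integral>p. pop_risk mu' loss (fst p) \<partial>J) = m"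
    by (simp_all add: m_def Q_def PW_def)
  have Q: "prob_space Q"
    unfolding Q_def PW_def by (intro prob_space_pair prob_space.prob_space_distr J mu'(1)) measurable
  have psi_nonneg: "0 \<le> psi l" if "bm < l" "l < bp" for l
    using cgf[OF that] prob_space.ln_integral_exp_centered_nonneg[OF Q loss_int, of l]
    unfolding m_def by (meson order_trans)
  have loss_i: "(\<lambda>p. loss (fst p) (snd p i)) \<in> borel_measurable J" if "i < n" for i
    using measurable_compose[of "\<lambda>p. (fst p, snd p i)" J "Wm \<Otimes>\<^sub>M Z", OF _ loss_meas] that
    by (simp add: measurable_cong_sets[OF sets_J refl])
  define A where "A i = prob_space.mutual_information J (exp 1) Wm Z fst (\<lambda>p. snd p i)
    + KL_divergence (exp 1) mu' mu" for i
  have A_nonneg: "0 \<le> A i"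
    and deviation: "integrable J (\<lambda>p. loss (fst p) (snd p i)) \<Longrightarrow>
      m - (\<integral>p. loss (fst p) (snd p i) \<partial>J) \<le> psi_inv_minus psi bm (A i) \<and>
      (\<integral>p. loss (fst p) (snd p i) \<partial>J) - m \<le> psi_inv_plus psi bp (A i)" if i: "i < n" for i
    using joint_component_deviation_bounds[OF J sets_J i marg[OF i] mu mu' ac D_finite
        I_finite[OF i, unfolded marg[OF i]] loss_meas b cgf[unfolded Q_def PW_def]]
    unfolding A_def PW_def by simp_all
  have "0 \<le> psi_inv_minus psi bm (A i) \<and> 0 \<le> psi_inv_plus psi bp (A i)" if "i < n" for i
    using psi_inv_nonneg[OF b A_nonneg[OF that] psi_nonneg] by simp
  from generalization_gap_bound[OF n_pos loss_nonneg loss_i pop deviation this]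
  show ?thesis unfolding A_def .
qed

end
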